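(* Let $A$ be as in the context, and assume that (i) no two con-edges for the same cluster belong to the same connected component of the conflict graph $K_A$; (ii) $A[\rho]$ is connected for every cluster $\rho$; (iii) no con-edge for a cluster $\rho$ is a bridge of $A[\rho]$; (iv) $K_A$ is bipartite; (v) $A$ contains no self-loop. Let $e$ be a con-edge of $A$ that crosses no other con-edge of $A$. Then there exists a planar set of spanning trees for $A$ if and only if there exists a planar set $S'$ of spanning trees for $A$ with $e\in S'$.
   Context: Let $C(G,T)$ be an embedded flat clustered graph: $G$ is a planar graph with a fixed planar embedding, $T$ a rooted tree whose leaves are the vertices of $G$ and whose non-root internal nodes (clusters) are all children of the root; a vertex belongs to the cluster that is its parent. For a face $f$ of $G$ let $B_f$ be the clockwise sequence of vertex occurrences on its boundary. A con-edge for a cluster $\alpha$ is a pair of occurrences on the boundary of one face $f$ of two distinct vertices of $\alpha$ lying in different connected components of $G[\alpha]$, drawn inside $f$; two con-edges in the same face cross (have a conflict) if their occurrences alternate along $B_f$. The multigraph of con-edges is obtained by inserting all con-edges into the faces, contracting each connected component of each $G[\alpha]$ into one vertex (belonging to $\alpha$), and deleting the edges of $G$. Throughout, $A$ denotes this multigraph or any multigraph obtained from it by a sequence of operations each of which removes some edges or contracts some edges that cross no other edge (contracting identifies the two end-vertices and deletes the edge). $A[\alpha]$ is the subgraph formed by the con-edges for $\alpha$. The conflict graph $K_A$ has one vertex per con-edge of $A$ and an edge between any two crossing con-edges. A planar set of spanning trees for $A$ is a set $S$ of edges of $A$ such that, for each cluster $\alpha$, the edges of $S$ for $\alpha$ form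 a tree spanning all vertices of $A$ belonging to $\alpha$, and no two edges of $S$ cross. *)

theory Defs
  imports Main
begin

text \<open>Vertices of A are the contracted components; each con-edge lies in a face and
  is given by two distinct positions (occurrences) on the boundary sequence B_f
  of that face; B_f lists the (images in A of the) vertex occurrences of f.\<close>

record ('v, 'e, 'f, 'c) conmg =
  verts :: "'v set"
  edges :: "'e set"
  face  :: "'e \<Rightarrow> 'f"
  bnd   :: "'f \<Rightarrow> 'v list"
  occ1  :: "'e \<Rightarrow> nat"
  occ2  :: "'e \<Rightarrow> nat"
  vcl   :: "'v \<Rightarrow> 'c"

definition end1 :: "('v, 'e, 'f, 'c) conmg \<Rightarrow> 'e \<Rightarrow> 'v" where
  "end1 A e = bnd A (face A e) ! occ1 A e"

definition end2 :: "('v, 'e, 'f, 'c) conmg \<Rightarrow> 'e \<Rightarrow> 'v" where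
  "end2 A e = bnd A (face A e) ! occ2 A e"

definition ecl :: "('v, 'e, 'f, 'c) conmg \<Rightarrow> 'e \<Rightarrow> 'c" where
  "ecl A e = vcl A (end1 A e)"

definition clusters :: "('v, 'e, 'f, 'c) conmg \<Rightarrow> 'c set" where
  "clusters A = vcl A ` verts A"

definition wf_conmg :: "('v, 'e, 'f, 'c) conmg \<Rightarrow> bool" where
  "wf_conmg A \<longleftrightarrow> finite (verts A) \<and> finite (edges A) \<and>
     (\<forall>e\<in>edges A.
        occ1 A e < length (bnd A (face A e)) \<and>
        occ2 A e < length (bnd A (face A e)) \<and>
        occ1 A e \<noteq> occ2 A e \<and>
        set (bnd A (face A e)) \<subseteq> verts A \<and>
        vcl A (end1 A e) = vcl A (end2 A e))"

definition between :: "nat \<Rightarrow> nat \<Rightarrow> nat \<Rightarrow> bool" where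
  "between a b x \<longleftrightarrow> min a b < x \<and> x < max a b"

text \<open>Two con-edges cross iff they lie in the same face and their occurrences
  alternate along the boundary sequence of that face.\<close>
definition cross :: "('v, 'e, 'f, 'c) conmg \<Rightarrow> 'e \<Rightarrow> 'e \<Rightarrow> bool" where
  "cross A e e' \<longleftrightarrow> e \<in> edges A \<and> e' \<in> edges A \<and> face A e = face A e' \<and>
     occ1 A e' \<notin> {occ1 A e, occ2 A e} \<and> occ2 A e' \<notin> {occ1 A e, occ2 A e} \<and>
     (between (occ1 A e) (occ2 A e) (occ1 A e') \<noteq> between (occ1 A e) (occ2 A e) (occ2 A e'))"

definition adj :: "('v, 'e, 'f, 'c) conmg \<Rightarrow> 'e set \<Rightarrow> ('v \<times> 'v) set" where
  "adj A F = {(u, v). \<exists>e\<in>F. (end1 A e = u \<and> end2 A e = v) \<or> (end1 A e = v \<and> end2 A e = u)}"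

definition connected_on :: "('v, 'e, 'f, 'c) conmg \<Rightarrow> 'e set \<Rightarrow> 'v set \<Rightarrow> bool" where
  "connected_on A F W \<longleftrightarrow> (\<forall>u\<in>W. \<forall>v\<in>W. (u, v) \<in> (adj A F)\<^sup>*)"

definition cl_edges :: "('v, 'e, 'f, 'c) conmg \<Rightarrow> 'e set \<Rightarrow> 'c \<Rightarrow> 'e set" where
  "cl_edges A F \<alpha> = {e \<in> F. ecl A e = \<alpha>}"

definition cl_verts :: "('v, 'e, 'f, 'c) conmg \<Rightarrow> 'c \<Rightarrow> 'v set" where
  "cl_verts A \<alpha> = {v \<in> verts A. vcl A v = \<alpha>}"

definition spanning_tree :: "('v, 'e, 'f, 'c) conmg \<Rightarrow> 'e set \<Rightarrow> 'v set \<Rightarrow> bool" where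
  "spanning_tree A F W \<longleftrightarrow> F \<subseteq> edges A \<and> (\<forall>e\<in>F. end1 A e \<in> W \<and> end2 A e \<in> W) \<and>
     connected_on A F W \<and> (\<forall>e\<in>F. \<not> connected_on A (F - {e}) W)"

definition planar_sst :: "('v, 'e, 'f, 'c) conmg \<Rightarrow> 'e set \<Rightarrow> bool" where
  "planar_sst A S \<longleftrightarrow> S \<subseteq> edges A \<and>
     (\<forall>\<alpha>\<in>clusters A. spanning_tree A (cl_edges A S \<alpha>) (cl_verts A \<alpha>)) \<and>
     (\<forall>e\<in>S. \<forall>e'\<in>S. \<not> cross A e e')"

definition conflict_rel :: "('v, 'e, 'f, 'c) conmg \<Rightarrow> ('e \<times> 'e) set" where
  "conflict_rel A = {(e, e'). cross A e e'}"

definition conflict_bipartite :: "('v, 'e, 'f, 'c) conmg \<Rightarrow> bool" where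
  "conflict_bipartite A \<longleftrightarrow> (\<exists>X. \<forall>e e'. cross A e e' \<longrightarrow> (e \<in> X \<longleftrightarrow> e' \<notin> X))"

definition is_bridge :: "('v, 'e, 'f, 'c) conmg \<Rightarrow> 'c \<Rightarrow> 'e \<Rightarrow> bool" where
  "is_bridge A \<rho> e \<longleftrightarrow> (end1 A e, end2 A e) \<notin> (adj A (cl_edges A (edges A) \<rho> - {e}))\<^sup>*"

end

theory Submission
  imports Defs
begin

text \<open>Since e crosses no con-edge, it can be added to a planar set of spanning trees without
  creating a crossing; it only has to be made room for in the tree T of its own cluster. The ends
  of e are distinct (no self-loops) and joined in T, so some edge h of T lies on a cycle of T + e.
  Then T + e - h is connected while T - h is not, hence a minimal connected subset of T + e - h
  containing e is a spanning tree through e.\<close>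

lemma adj_mono: "F \<subseteq> F' \<Longrightarrow> adj A F \<subseteq> adj A F'"
  unfolding adj_def by blast

lemma adj_edge: "x \<in> F \<Longrightarrow> (end1 A x, end2 A x) \<in> adj A F"
  unfolding adj_def by blast

lemma sym_adj: "sym (adj A F)"
  unfolding sym_def adj_def by blast

lemma rtrancl_adj_sym: "(u, v) \<in> (adj A F)\<^sup>* \<Longrightarrow> (v, u) \<in> (adj A F)\<^sup>*"
  by (rule symD[OF sym_rtrancl[OF sym_adj]])

lemma connected_on_mono: "F \<subseteq> F' \<Longrightarrow> connected_on A F W \<Longrightarrow> connected_on A F' W"
  unfolding connected_on_def using rtrancl_mono[OF adj_mono] by blast

lemma rtrancl_adj_Diff:
  assumes "(u, v) \<in> (adj A F)\<^sup>*"
  shows "(u, v) \<in> (adj A (F - {h}))\<^sup>* \<or> (u, end1 A h) \<in> (adj A (F - {h}))\<^sup>*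
           \<or> (u, end2 A h) \<in> (adj A (F - {h}))\<^sup>*"
  using assms
proof (induction rule: rtrancl_induct)
  case base
  then show ?case by simp
next
  case (step y z)
  from step(2) obtain x where x: "x \<in> F"
    "(end1 A x = y \<and> end2 A x = z) \<or> (end1 A x = z \<and> end2 A x = y)"
    unfolding adj_def by auto
  show ?case
  proof (cases "x = h")
    case True
    then show ?thesis using step(3) x(2) by auto
  next
    case False
    then have "(y, z) \<in> adj A (F - {h})" using x unfolding adj_def by blast
    then show ?thesis using step(3) by (meson rtrancl_into_rtrancl)
  qed
qed

lemma connected_on_Diff_cycle_edge:
  assumes "connected_on A F W" and "(end1 A h, end2 A h) \<in> (adj A (F - {h}))\<^sup>*"
  shows "connected_on A (F - {h}) W"
proof -
  have "adj A F \<subseteq> (adj A (F - {h}))\<^sup>*"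
  proof
    fix p assume "p \<in> adj A F"
    then obtain x where x: "x \<in> F" "p = (end1 A x, end2 A x) \<or> p = (end2 A x, end1 A x)"
      unfolding adj_def by blast
    show "p \<in> (adj A (F - {h}))\<^sup>*"
    proof (cases "x = h")
      case True
      then show ?thesis using x(2) assms(2) rtrancl_adj_sym[OF assms(2)] by blast
    next
      case False
      then have "p \<in> adj A (F - {h})" using x unfolding adj_def by blast
      then show ?thesis by blast
    qed
  qed
  then have "(adj A F)\<^sup>* \<subseteq> (adj A (F - {h}))\<^sup>*"
    by (rule rtrancl_subset_rtrancl)
  then show ?thesis
    using assms(1) unfolding connected_on_def by blast
qed

lemma cycle_through_new_edge:
  assumes ab: "(a, b) \<in> (adj A F)\<^sup>*" and not_ab: "(a, b) \<notin> (adj A (F - {h}))\<^sup>*"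
    and e: "end1 A e = a" "end2 A e = b" "e \<noteq> h"
  shows "(end1 A h, end2 A h) \<in> (adj A (insert e F - {h}))\<^sup>*"
proof -
  let ?R = "(adj A (F - {h}))\<^sup>*" and ?R' = "(adj A (insert e F - {h}))\<^sup>*"
  have R_R': "?R \<subseteq> ?R'" by (intro rtrancl_mono adj_mono) blast
  have ab': "(a, b) \<in> ?R'" using e adj_edge[of e "insert e F - {h}"] by auto
  have not_ba: "(b, a) \<notin> ?R" by (meson not_ab rtrancl_adj_sym)
  have a_reaches: "(a, end1 A h) \<in> ?R \<or> (a, end2 A h) \<in> ?R"
    using rtrancl_adj_Diff[OF ab] not_ab by blast
  have b_reaches: "(b, end1 A h) \<in> ?R \<or> (b, end2 A h) \<in> ?R"
    using rtrancl_adj_Diff[OF rtrancl_adj_sym[OF ab]] not_ba by blast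
  have not_both: False if "(a, z) \<in> ?R" "(b, z) \<in> ?R" for z
    using not_ab rtrancl_trans[OF that(1) rtrancl_adj_sym[OF that(2)]] by blast
  have via_e: "(x, y) \<in> ?R'" if "(a, x) \<in> ?R" "(b, y) \<in> ?R" for x y
  proof -
    have "(x, a) \<in> ?R'" "(b, y) \<in> ?R'"
      using R_R' rtrancl_adj_sym[OF that(1)] that(2) by blast+
    then show ?thesis using ab' by (meson rtrancl_trans)
  qed
  from a_reaches b_reaches show ?thesis
  proof (elim disjE)
    assume "(a, end1 A h) \<in> ?R" "(b, end2 A h) \<in> ?R"
    then show ?thesis by (rule via_e)
  next
    assume "(a, end2 A h) \<in> ?R" "(b, end1 A h) \<in> ?R"
    then show ?thesis by (rule rtrancl_adj_sym[OF via_e])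
  qed (use not_both in blast)+
qed

lemma ex_edge_on_cycle:
  assumes "finite T" "e \<notin> T" "end1 A e \<noteq> end2 A e" "(end1 A e, end2 A e) \<in> (adj A T)\<^sup>*"
  shows "\<exists>h\<in>T. (end1 A h, end2 A h) \<in> (adj A (insert e T - {h}))\<^sup>*"
proof -
  let ?a = "end1 A e" and ?b = "end2 A e"
  let ?C = "{T'. T' \<subseteq> T \<and> (?a, ?b) \<in> (adj A T')\<^sup>*}"
  have "finite ?C" using assms(1) by simp
  then obtain T0 where T0: "T0 \<subseteq> T" "(?a, ?b) \<in> (adj A T0)\<^sup>*"
    and min: "\<forall>T' \<in> ?C. T' \<subseteq> T0 \<longrightarrow> T0 = T'"
    using finite_has_minimal2[of ?C T] assms(4) by auto
  have "T0 \<noteq> {}" using T0(2) assms(3) by (auto simp: adj_def)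
  then obtain h where h: "h \<in> T0" by blast
  have "(?a, ?b) \<notin> (adj A (T0 - {h}))\<^sup>*" using min T0(1) h by blast
  then have "(end1 A h, end2 A h) \<in> (adj A (insert e T0 - {h}))\<^sup>*"
    using cycle_through_new_edge[OF T0(2)] h T0(1) assms(2) by blast
  moreover have "(adj A (insert e T0 - {h}))\<^sup>* \<subseteq> (adj A (insert e T - {h}))\<^sup>*"
    using T0(1) by (intro rtrancl_mono adj_mono) blast
  ultimately show ?thesis using T0(1) h by blast
qed

lemma ex_spanning_tree_through:
  assumes "finite G" "G \<subseteq> edges A" "\<forall>x\<in>G. end1 A x \<in> W \<and> end2 A x \<in> W"
    and "connected_on A G W" "e \<in> G" "\<not> connected_on A (G - {e}) W"
  shows "\<exists>F\<subseteq>G. e \<in> F \<and> spanning_tree A F W"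
proof -
  let ?C = "{F. F \<subseteq> G \<and> e \<in> F \<and> connected_on A F W}"
  have fin: "finite ?C" using assms(1) by simp
  have G: "G \<in> ?C" using assms(4,5) by blast
  obtain F where "F \<in> ?C" and min: "\<forall>F' \<in> ?C. F' \<subseteq> F \<longrightarrow> F = F'"
    using finite_has_minimal2[OF fin G] by blast
  then have F: "F \<subseteq> G" "e \<in> F" "connected_on A F W" by blast+
  have "\<not> connected_on A (F - {g}) W" if "g \<in> F" for g
  proof
    assume conn: "connected_on A (F - {g}) W"
    show False
    proof (cases "g = e")
      case True
      then show False
        using conn connected_on_mono[of "F - {e}" "G - {e}"] F(1) assms(6) by blast
    next
      case False
      then have "F - {g} \<in> ?C" using F conn by blast
      then have "F = F - {g}" using min by blast
      then show False using that by blast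
    qed
  qed
  moreover have "F \<subseteq> edges A" "\<forall>x\<in>F. end1 A x \<in> W \<and> end2 A x \<in> W"
    using F(1) assms(2,3) by blast+
  ultimately have "spanning_tree A F W" using F(3) unfolding spanning_tree_def by blast
  then show ?thesis using F(1,2) by blast
qed

lemma spanning_tree_exchange:
  assumes T: "spanning_tree A T W" "finite T"
    and e: "e \<in> edges A" "end1 A e \<in> W" "end2 A e \<in> W" "end1 A e \<noteq> end2 A e"
  shows "\<exists>F\<subseteq>insert e T. e \<in> F \<and> spanning_tree A F W"
proof (cases "e \<in> T")
  case True
  then show ?thesis using T(1) by blast
next
  case False
  have T_edges: "T \<subseteq> edges A" "\<forall>x\<in>T. end1 A x \<in> W \<and> end2 A x \<in> W"
    and T_conn: "connected_on A T W" and T_min: "\<forall>x\<in>T. \<not> connected_on A (T - {x}) W"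
    using T(1) unfolding spanning_tree_def by blast+
  have "(end1 A e, end2 A e) \<in> (adj A T)\<^sup>*"
    using T_conn e(2,3) unfolding connected_on_def by blast
  then obtain h where h: "h \<in> T" "(end1 A h, end2 A h) \<in> (adj A (insert e T - {h}))\<^sup>*"
    using ex_edge_on_cycle[OF T(2) False e(4)] by blast
  let ?G = "insert e T - {h}"
  have "connected_on A (insert e T) W"
    using connected_on_mono[OF subset_insertI T_conn] .
  then have "connected_on A ?G W" using h(2) by (rule connected_on_Diff_cycle_edge)
  moreover have "?G - {e} = T - {h}" using False by blast
  then have "\<not> connected_on A (?G - {e}) W" using T_min h(1) by simp
  moreover have "finite ?G" using T(2) by simp
  moreover have "?G \<subseteq> edges A" "\<forall>x\<in>?G. end1 A x \<in> W \<and> end2 A x \<in> W" "e \<in> ?G"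
    using T_edges e h(1) False by auto
  ultimately obtain F where "F \<subseteq> ?G" "e \<in> F" "spanning_tree A F W"
    using ex_spanning_tree_through[of ?G A W e] by blast
  then show ?thesis by blast
qed

lemma cross_sym: "wf_conmg A \<Longrightarrow> cross A x y \<Longrightarrow> cross A y x"
  unfolding cross_def wf_conmg_def between_def
  by (auto simp: min_def max_def split: if_splits)

lemma ends_in_cl_verts:
  assumes "wf_conmg A" "e \<in> edges A"
  shows "end1 A e \<in> cl_verts A (ecl A e)" "end2 A e \<in> cl_verts A (ecl A e)"
proof -
  have "occ1 A e < length (bnd A (face A e))" "occ2 A e < length (bnd A (face A e))"
    "set (bnd A (face A e)) \<subseteq> verts A" "vcl A (end1 A e) = vcl A (end2 A e)"
    using assms unfolding wf_conmg_def by blast+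
  then have "end1 A e \<in> verts A" "end2 A e \<in> verts A"
    unfolding end1_def end2_def by (meson nth_mem subsetD)+
  then show "end1 A e \<in> cl_verts A (ecl A e)" "end2 A e \<in> cl_verts A (ecl A e)"
    using \<open>vcl A (end1 A e) = vcl A (end2 A e)\<close> by (simp_all add: cl_verts_def ecl_def)
qed

lemma planar_sst_replace_tree:
  assumes wf: "wf_conmg A" and S: "planar_sst A S"
    and e: "e \<in> edges A" "\<forall>e'\<in>edges A. \<not> cross A e e'"
    and F: "F \<subseteq> insert e S" "\<forall>x\<in>F. ecl A x = \<alpha>" "spanning_tree A F (cl_verts A \<alpha>)"
  shows "planar_sst A ((S - cl_edges A S \<alpha>) \<union> F)"
proof -
  let ?S' = "(S - cl_edges A S \<alpha>) \<union> F"
  have S_edges: "S \<subseteq> edges A"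
    and S_trees: "\<forall>\<beta>\<in>clusters A. spanning_tree A (cl_edges A S \<beta>) (cl_verts A \<beta>)"
    and S_planar: "\<forall>x\<in>S. \<forall>y\<in>S. \<not> cross A x y"
    using S unfolding planar_sst_def by blast+
  have S'_sub: "?S' \<subseteq> insert e S" using F(1) by blast
  have "spanning_tree A (cl_edges A ?S' \<beta>) (cl_verts A \<beta>)" if "\<beta> \<in> clusters A" for \<beta>
  proof (cases "\<beta> = \<alpha>")
    case True
    then have "cl_edges A ?S' \<beta> = F" using F(2) unfolding cl_edges_def by auto
    then show ?thesis using F(3) True by simp
  next
    case False
    then have "cl_edges A ?S' \<beta> = cl_edges A S \<beta>" using F(2) unfolding cl_edges_def by auto
    then show ?thesis using S_trees that by simp
  qed
  moreover have "\<not> cross A x y" if "x \<in> insert e S" "y \<in> insert e S" for x y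
  proof
    assume xy: "cross A x y"
    then have "x \<in> edges A" "y \<in> edges A" unfolding cross_def by blast+
    moreover have "x \<noteq> e" using e(2) xy \<open>y \<in> edges A\<close> by blast
    moreover have "y \<noteq> e" using e(2) cross_sym[OF wf xy] \<open>x \<in> edges A\<close> by blast
    ultimately show False using that xy S_planar by blast
  qed
  moreover have "?S' \<subseteq> edges A" using S'_sub S_edges e(1) by blast
  ultimately show ?thesis
    using S'_sub unfolding planar_sst_def by (meson subsetD)
qed

theorem lemma8:
  fixes A :: "('v, 'e, 'f, 'c) conmg" and e :: 'e
  assumes wf: "wf_conmg A"
    and i: "\<forall>e1\<in>edges A. \<forall>e2\<in>edges A. e1 \<noteq> e2 \<and> ecl A e1 = ecl A e2
              \<longrightarrow> (e1, e2) \<notin> (conflict_rel A)\<^sup>*"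
    and ii: "\<forall>\<rho>\<in>clusters A. connected_on A (cl_edges A (edges A) \<rho>) (cl_verts A \<rho>)"
    and iii: "\<forall>\<rho>\<in>clusters A. \<forall>e'\<in>cl_edges A (edges A) \<rho>. \<not> is_bridge A \<rho> e'"
    and iv: "conflict_bipartite A"
    and v: "\<forall>e'\<in>edges A. end1 A e' \<noteq> end2 A e'"
    and e_in: "e \<in> edges A"
    and e_free: "\<forall>e'\<in>edges A. \<not> cross A e e'"
  shows "(\<exists>S. planar_sst A S) \<longleftrightarrow> (\<exists>S'. planar_sst A S' \<and> e \<in> S')"
proof
  assume "\<exists>S. planar_sst A S"
  then obtain S where S: "planar_sst A S" ..
  define \<alpha> where "\<alpha> = ecl A e"
  let ?T = "cl_edges A S \<alpha>"
  have ends: "end1 A e \<in> cl_verts A \<alpha>" "end2 A e \<in> cl_verts A \<alpha>"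
    using ends_in_cl_verts[OF wf e_in] unfolding \<alpha>_def .
  then have "\<alpha> \<in> clusters A" unfolding clusters_def cl_verts_def by blast
  then have T: "spanning_tree A ?T (cl_verts A \<alpha>)" using S unfolding planar_sst_def by blast
  have "?T \<subseteq> edges A" using T unfolding spanning_tree_def by blast
  moreover have "finite (edges A)" using wf unfolding wf_conmg_def by blast
  ultimately have "finite ?T" by (rule finite_subset)
  moreover have "end1 A e \<noteq> end2 A e" using v e_in by blast
  ultimately obtain F where F: "F \<subseteq> insert e ?T" "e \<in> F" "spanning_tree A F (cl_verts A \<alpha>)"
    using spanning_tree_exchange[OF T _ e_in ends] by blast
  have "F \<subseteq> insert e S" "\<forall>x\<in>F. ecl A x = \<alpha>"
    using F(1) unfolding cl_edges_def \<alpha>_def by blast+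
  then have "planar_sst A ((S - ?T) \<union> F)"
    using F(3) by (rule planar_sst_replace_tree[OF wf S e_in e_free])
  then show "\<exists>S'. planar_sst A S' \<and> e \<in> S'" using F(2) by blast
qed blast

end
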